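(* Let $G$ be a connected graph with $n$ vertices, let $1\le k\le n$, and let $B_n^{2\times k}$ be the graph obtained from two disjoint copies $G_{n,1}$ and $G_{n,2}$ of $G$ by adding $k$ distinct edges $e_1,\dots,e_k$, each of the form $e_i=(v_{i,1},v_{i,2})$ with $v_{i,1}$ a vertex of $G_{n,1}$ and $v_{i,2}$ a vertex of $G_{n,2}$. Then $$0 < \lambda_2(B_n^{2\times k}) \le \frac{2k}{n}.$$
   Context: All graphs are finite, simple and unweighted. For a graph $H$ with adjacency matrix $A$ and diagonal degree matrix $D$, the graph Laplacian is $L_H = D - A$, with eigenvalues ordered $0=\lambda_1 \le \lambda_2 \le \dots$; $\lambda_2(H)$ denotes the second smallest eigenvalue of $L_H$. *)

theory Defs
  imports "Jordan_Normal_Form.Char_Poly" "HOL-Library.Multiset"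
begin

definition simple_graph :: "nat \<Rightarrow> (nat \<Rightarrow> nat \<Rightarrow> bool) \<Rightarrow> bool" where
  "simple_graph N adj \<longleftrightarrow>
     (\<forall>u v. adj u v \<longrightarrow> u < N \<and> v < N) \<and>
     (\<forall>u v. adj u v \<longrightarrow> adj v u) \<and> (\<forall>u. \<not> adj u u)"

definition connected_graph :: "nat \<Rightarrow> (nat \<Rightarrow> nat \<Rightarrow> bool) \<Rightarrow> bool" where
  "connected_graph N adj \<longleftrightarrow> (\<forall>u<N. \<forall>v<N. adj\<^sup>*\<^sup>* u v)"

definition degree :: "nat \<Rightarrow> (nat \<Rightarrow> nat \<Rightarrow> bool) \<Rightarrow> nat \<Rightarrow> nat" where
  "degree N adj u = card {v. v < N \<and> adj u v}"

definition laplacian :: "nat \<Rightarrow> (nat \<Rightarrow> nat \<Rightarrow> bool) \<Rightarrow> real mat" where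
  "laplacian N adj = mat N N (\<lambda>(i,j).
      (if i = j then real (degree N adj i) else 0) - (if adj i j then 1 else 0))"

definition laplacian_eigenvalues :: "nat \<Rightarrow> (nat \<Rightarrow> nat \<Rightarrow> bool) \<Rightarrow> real list" where
  "laplacian_eigenvalues N adj = sorted_list_of_multiset (proots (char_poly (laplacian N adj)))"

definition lambda2 :: "nat \<Rightarrow> (nat \<Rightarrow> nat \<Rightarrow> bool) \<Rightarrow> real" where
  "lambda2 N adj = laplacian_eigenvalues N adj ! 1"

text \<open>Two disjoint copies of G (on {0..<n}): copy 1 has vertices i, copy 2 has vertices n+i;
  plus the connecting edges (u, n+w) for (u,w) in K.\<close>
definition double_graph ::
  "nat \<Rightarrow> (nat \<Rightarrow> nat \<Rightarrow> bool) \<Rightarrow> (nat \<times> nat) set \<Rightarrow> nat \<Rightarrow> nat \<Rightarrow> bool" where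
  "double_graph n adj K i j \<longleftrightarrow>
     (i < n \<and> j < n \<and> adj i j) \<or>
     (n \<le> i \<and> n \<le> j \<and> i < 2*n \<and> j < 2*n \<and> adj (i - n) (j - n)) \<or>
     (i < n \<and> n \<le> j \<and> j < 2*n \<and> (i, j - n) \<in> K) \<or>
     (j < n \<and> n \<le> i \<and> i < 2*n \<and> (j, i - n) \<in> K)"

end

(*
  The Laplacian L of the doubled graph B is real symmetric, so it has an orthonormal eigenbasis, and
  x . L x is half the sum of (x_i - x_j)^2 over adjacent ordered pairs (i, j). Hence all eigenvalues
  are nonnegative, and an eigenvector of eigenvalue 0 is constant along edges, hence constant as B is
  connected; since two orthonormal vectors cannot both be constant, 0 is a simple eigenvalue and
  lambda2 > 0. For the upper bound, the vector that is 1 on the first copy and -1 on the second is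
  orthogonal to the constant 0-eigenvector, and only the 2k ordered crossing pairs contribute to its
  energy, so lambda2 is at most its Rayleigh quotient 4k / 2n.
*)

theory Submission
  imports Defs "Jordan_Normal_Form.Schur_Decomposition"
begin

section \<open>Spectral theorem for real symmetric matrices\<close>

lemma real_scalar_prod_self_nonneg: "0 \<le> (v :: real vec) \<bullet> v"
  using conjugate_square_ge_0_vec[of v] by simp

lemma real_scalar_prod_self_pos:
  "(v :: real vec) \<in> carrier_vec n \<Longrightarrow> 0 < v \<bullet> v \<longleftrightarrow> v \<noteq> 0\<^sub>v n"
  using conjugate_square_greater_0_vec[of v n] by simp

lemma real_symmetric_eigenvalue_real:
  fixes A :: "real mat"
  assumes A: "A \<in> carrier_mat n n" and sym: "A\<^sup>T = A"
    and "eigenvalue (map_mat complex_of_real A) a"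
  shows "a \<in> \<real>"
proof -
  obtain v where v: "v \<in> carrier_vec n" "v \<noteq> 0\<^sub>v n" "map_mat complex_of_real A *\<^sub>v v = a \<cdot>\<^sub>v v"
    using assms(3) A unfolding eigenvalue_def eigenvector_def by auto
  \<comment> \<open>\<open>s = v\<^sup>* A v\<close> is real since \<open>A\<close> is real symmetric, and equals \<open>a |v|\<^sup>2\<close> by the eigen-equation.\<close>
  define s where "s = (\<Sum>i<n. \<Sum>j<n. cnj (v $ i) * of_real (A $$ (i, j)) * v $ j)"
  define r where "r = (\<Sum>i<n. (cmod (v $ i))\<^sup>2)"
  have row: "(\<Sum>j<n. of_real (A $$ (i, j)) * v $ j) = a * v $ i" if i: "i < n" for i
    using arg_cong[OF v(3), of "\<lambda>w. w $ i"] A v(1) i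
    by (simp add: scalar_prod_def lessThan_atLeast0)
  have "s = (\<Sum>i<n. cnj (v $ i) * (\<Sum>j<n. of_real (A $$ (i, j)) * v $ j))"
    unfolding s_def by (simp add: sum_distrib_left mult.assoc)
  also have "\<dots> = (\<Sum>i<n. a * (cnj (v $ i) * v $ i))"
    using row by (intro sum.cong refl) (simp add: mult_ac)
  also have "\<dots> = a * of_real r"
    unfolding r_def of_real_sum sum_distrib_left
    by (intro sum.cong refl) (simp only: complex_norm_square mult.commute)
  finally have s: "s = a * of_real r" .
  have "cnj s = (\<Sum>i<n. \<Sum>j<n. v $ i * of_real (A $$ (i, j)) * cnj (v $ j))"
    unfolding s_def by simp
  also have "\<dots> = (\<Sum>j<n. \<Sum>i<n. v $ i * of_real (A $$ (i, j)) * cnj (v $ j))"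
    by (rule sum.swap)
  also have "\<dots> = s"
  proof -
    have "A $$ (i, j) = A $$ (j, i)" if "i < n" "j < n" for i j
      using sym A that by (metis carrier_matD index_transpose_mat(1))
    then show ?thesis unfolding s_def by (intro sum.cong refl) (simp add: mult_ac)
  qed
  finally have "cnj s = s" .
  moreover have "r \<noteq> 0"
  proof
    assume "r = 0"
    then have "\<forall>i\<in>{..<n}. (cmod (v $ i))\<^sup>2 = 0"
      unfolding r_def by (subst sum_nonneg_eq_0_iff[symmetric]) auto
    then have "v = 0\<^sub>v n" using v(1) by (intro eq_vecI) auto
    with v(2) show False ..
  qed
  ultimately have "cnj a = a" using s by simp
  then show ?thesis by (simp add: Reals_cnj_iff)
qed

lemma real_symmetric_char_poly_splits:
  fixes A :: "real mat"
  assumes A: "A \<in> carrier_mat n n" and sym: "A\<^sup>T = A"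
  obtains es where "char_poly A = (\<Prod>e\<leftarrow>es. [:-e, 1:])" "length es = n"
proof -
  interpret of_real_poly: map_poly_inj_comm_ring_hom "of_real :: real \<Rightarrow> complex" ..
  let ?Ac = "map_mat complex_of_real A"
  have Ac: "?Ac \<in> carrier_mat n n" using A by auto
  obtain as where fac: "char_poly ?Ac = (\<Prod>a\<leftarrow>as. [:-a, 1:])" and len: "length as = n"
    using char_poly_factorized[OF Ac] by blast
  have real: "of_real (Re a) = a" if "a \<in> set as" for a
  proof -
    have "poly (char_poly ?Ac) a = 0" unfolding fac using that by (rule linear_poly_root)
    then have "eigenvalue ?Ac a" using eigenvalue_root_char_poly[OF Ac] by simp
    then show ?thesis using real_symmetric_eigenvalue_real[OF A sym] by (simp add: Reals_cnj_iff complex_eq_iff)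
  qed
  have "map_poly of_real (char_poly A) = char_poly ?Ac"
    by (rule of_real_hom.char_poly_hom[OF A, symmetric])
  also have "\<dots> = map_poly of_real (\<Prod>e\<leftarrow>map Re as. [:-e, 1:])"
    unfolding fac of_real_poly.hom_prod_list using real by (induction as) auto
  finally have "char_poly A = (\<Prod>e\<leftarrow>map Re as. [:-e, 1:])"
    by (rule of_real_poly.injectivity)
  with len show thesis by (intro that[of "map Re as"]) auto
qed

lemma orthonormal_mat_of_corthogonal:
  fixes ws :: "real vec list"
  assumes ws: "set ws \<subseteq> carrier_vec n" "corthogonal ws" "length ws = n"
  defines "W \<equiv> mat_of_cols n (map (\<lambda>w. (1 / sqrt (w \<bullet> w)) \<cdot>\<^sub>v w) ws)"
  shows "W \<in> carrier_mat n n" "W\<^sup>T * W = 1\<^sub>m n"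
    and "i < n \<Longrightarrow> col W i = (1 / sqrt (ws ! i \<bullet> ws ! i)) \<cdot>\<^sub>v ws ! i"
proof -
  have wsc: "ws ! i \<in> carrier_vec n" if "i < n" for i
    using ws that by auto
  have orth: "ws ! i \<bullet> ws ! j = 0 \<longleftrightarrow> i \<noteq> j" if "i < n" "j < n" for i j
    using ws that unfolding corthogonal_def by (simp add: scalar_prod_def)
  have pos: "0 < ws ! i \<bullet> ws ! i" if "i < n" for i
    using orth[OF that that] real_scalar_prod_self_nonneg[of "ws ! i"] by (simp add: order_le_neq_trans)
  show W: "W \<in> carrier_mat n n" using ws unfolding W_def by auto
  show col: "col W i = (1 / sqrt (ws ! i \<bullet> ws ! i)) \<cdot>\<^sub>v ws ! i" if "i < n" for i
    using ws that unfolding W_def by (subst col_mat_of_cols) auto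
  have "col W i \<bullet> col W j = (if i = j then 1 else 0)" if "i < n" "j < n" for i j
  proof -
    have "col W i \<bullet> col W j = ws ! i \<bullet> ws ! j / (sqrt (ws ! i \<bullet> ws ! i) * sqrt (ws ! j \<bullet> ws ! j))"
      using col[OF that(1)] col[OF that(2)] wsc[OF that(1)] wsc[OF that(2)] by simp
    then show ?thesis
      using orth[OF that] pos[OF that(1)] by auto
  qed
  then show "W\<^sup>T * W = 1\<^sub>m n"
    using W by (intro eq_matI) auto
qed

lemma orthonormal_basis_extension:
  fixes v :: "real vec"
  assumes v: "v \<in> carrier_vec n" and v0: "v \<noteq> 0\<^sub>v n"
  obtains W where "W \<in> carrier_mat n n" "W\<^sup>T * W = 1\<^sub>m n"
    "col W 0 = (1 / sqrt (v \<bullet> v)) \<cdot>\<^sub>v v"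
proof -
  interpret cof_vec_space n "TYPE(real)" .
  have n: "0 < n" using v v0 by (cases n) auto
  define b where "b = basis_completion v"
  from basis_completion[OF v v0, folded b_def]
  have dist: "distinct b" and indep: "\<not> lin_dep (set b)" and b: "set b \<subseteq> carrier_vec n"
    and hd: "hd b = v" and len: "length b = n" by auto
  then obtain vs where bv: "b = v # vs" using n by (cases b) auto
  define ws where "ws = gram_schmidt n b"
  from gram_schmidt_result[OF b dist indep refl, folded ws_def]
  have ws: "set ws \<subseteq> carrier_vec n" "corthogonal ws" "length ws = n"
    by (auto simp: len)
  have "ws ! 0 = v"
    using gram_schmidt_hd[OF v, of vs] ws(3) n unfolding ws_def bv by (cases "gram_schmidt n (v # vs)") auto
  with orthonormal_mat_of_corthogonal[OF ws] n show thesis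
    by (intro that[of "mat_of_cols n (map (\<lambda>w. (1 / sqrt (w \<bullet> w)) \<cdot>\<^sub>v w) ws)"]) auto
qed

lemma symmetric_deflation:
  fixes A W :: "real mat"
  assumes A: "A \<in> carrier_mat n n" and sym: "A\<^sup>T = A" and n: "0 < n"
    and W: "W \<in> carrier_mat n n" and orth: "W\<^sup>T * W = 1\<^sub>m n"
    and eigen: "A *\<^sub>v col W 0 = e \<cdot>\<^sub>v col W 0"
  obtains B where "B \<in> carrier_mat (n - 1) (n - 1)" "B\<^sup>T = B"
    and "W\<^sup>T * A * W = four_block_mat (mat 1 1 (\<lambda>_. e)) (0\<^sub>m 1 (n - 1)) (0\<^sub>m (n - 1) 1) B"
proof -
  define A' where "A' = W\<^sup>T * A * W"
  have A': "A' \<in> carrier_mat n n" using A W unfolding A'_def by auto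
  have sym': "A'\<^sup>T = A'"
    unfolding A'_def using A W
    by (simp add: transpose_mult[of _ n n _ n] sym assoc_mult_mat[of _ n n _ n _ n])
  have first_col: "A' $$ (i, 0) = (if i = 0 then e else 0)" if i: "i < n" for i
  proof -
    have "A' $$ (i, 0) = col W i \<bullet> col (A * W) 0"
      unfolding A'_def using A W i n by (simp add: assoc_mult_mat[of _ n n _ n _ n])
    also have "\<dots> = col W i \<bullet> (A *\<^sub>v col W 0)"
      using col_mult2[OF A W n] by simp
    also have "\<dots> = e * (W\<^sup>T * W) $$ (i, 0)"
      unfolding eigen using W i n by simp
    finally show ?thesis using orth i n by simp
  qed
  have entry_sym: "A' $$ (j, i) = A' $$ (i, j)" if "i < n" "j < n" for i j
    using sym' A' that by (metis carrier_matD index_transpose_mat(1))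
  have first_row: "A' $$ (0, j) = (if j = 0 then e else 0)" if "j < n" for j
    using first_col[OF that] entry_sym[OF that] n by simp
  define B where "B = mat (n - 1) (n - 1) (\<lambda>(i, j). A' $$ (Suc i, Suc j))"
  show thesis
  proof
    show "B \<in> carrier_mat (n - 1) (n - 1)" unfolding B_def by simp
    show "B\<^sup>T = B"
      unfolding B_def using entry_sym by (intro eq_matI) auto
    show "W\<^sup>T * A * W = four_block_mat (mat 1 1 (\<lambda>_. e)) (0\<^sub>m 1 (n - 1)) (0\<^sub>m (n - 1) 1) B"
      using A' n first_col first_row unfolding A'_def[symmetric] B_def
      by (intro eq_matI) (auto simp: four_block_mat_def)
  qed
qed

lemma orthogonal_similar:
  fixes A W :: "'a :: field mat"
  assumes A: "A \<in> carrier_mat n n" and W: "W \<in> carrier_mat n n" and orth: "W\<^sup>T * W = 1\<^sub>m n"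
  shows "similar_mat_wit A (W\<^sup>T * A * W) W W\<^sup>T"
proof -
  have WWT: "W * W\<^sup>T = 1\<^sub>m n"
    using mat_mult_left_right_inverse[of "W\<^sup>T" n W] W orth by auto
  have "W * (W\<^sup>T * A * W) * W\<^sup>T = (W * W\<^sup>T) * A * (W * W\<^sup>T)"
    using A W by (simp add: assoc_mult_mat[of _ n n _ n _ n])
  then show ?thesis
    using A W orth WWT by (intro similar_mat_witI[of _ _ n]) auto
qed

lemma similar_mat_wit_extend_block:
  fixes B D :: "'a :: comm_ring_1 mat"
  assumes B: "B \<in> carrier_mat m m" and sim: "similar_mat_wit B D Q Q\<^sup>T"
  shows "\<exists>R. similar_mat_wit (four_block_mat (mat 1 1 (\<lambda>_. e)) (0\<^sub>m 1 m) (0\<^sub>m m 1) B)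
    (four_block_mat (mat 1 1 (\<lambda>_. e)) (0\<^sub>m 1 m) (0\<^sub>m m 1) D) R R\<^sup>T"
proof -
  let ?R = "four_block_mat (1\<^sub>m 1) (0\<^sub>m 1 m) (0\<^sub>m m 1) Q"
  have Q: "Q \<in> carrier_mat m m" using similar_mat_witD2[OF B sim] by auto
  then have "?R\<^sup>T = four_block_mat (1\<^sub>m 1) (0\<^sub>m 1 m) (0\<^sub>m m 1) Q\<^sup>T"
    by (subst transpose_four_block_mat[of _ 1 1 _ m]) auto
  moreover have "similar_mat_wit (four_block_mat (mat 1 1 (\<lambda>_. e)) (0\<^sub>m 1 m) (0\<^sub>m m 1) B)
    (four_block_mat (mat 1 1 (\<lambda>_. e)) (0\<^sub>m 1 m) (0\<^sub>m m 1) D)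
    ?R (four_block_mat (1\<^sub>m 1) (0\<^sub>m 1 m) (0\<^sub>m m 1) Q\<^sup>T)"
    by (rule similar_mat_wit_four_block[OF similar_mat_wit_refl sim]) (use Q B in auto)
  ultimately show ?thesis by (intro exI[of _ ?R]) simp
qed

lemma real_symmetric_eigen_deflation:
  fixes A :: "real mat"
  assumes A: "A \<in> carrier_mat n n" and sym: "A\<^sup>T = A" and n: "0 < n"
    and cp: "char_poly A = [:-e, 1:] * p"
  obtains W B where "W \<in> carrier_mat n n" "W\<^sup>T * W = 1\<^sub>m n"
    "B \<in> carrier_mat (n - 1) (n - 1)" "B\<^sup>T = B" "char_poly B = p"
    "W\<^sup>T * A * W = four_block_mat (mat 1 1 (\<lambda>_. e)) (0\<^sub>m 1 (n - 1)) (0\<^sub>m (n - 1) 1) B"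
proof -
  have "eigenvalue A e" unfolding eigenvalue_root_char_poly[OF A] cp by simp
  then obtain v where v: "v \<in> carrier_vec n" "v \<noteq> 0\<^sub>v n" "A *\<^sub>v v = e \<cdot>\<^sub>v v"
    unfolding eigenvalue_def eigenvector_def using A by auto
  obtain W where W: "W \<in> carrier_mat n n" "W\<^sup>T * W = 1\<^sub>m n"
    and W0: "col W 0 = (1 / sqrt (v \<bullet> v)) \<cdot>\<^sub>v v"
    using orthonormal_basis_extension[OF v(1,2)] by blast
  have "A *\<^sub>v col W 0 = e \<cdot>\<^sub>v col W 0"
    unfolding W0 using A v by (simp add: mult_mat_vec smult_smult_assoc mult.commute)
  then obtain B where B: "B \<in> carrier_mat (n - 1) (n - 1)" "B\<^sup>T = B"
    and block: "W\<^sup>T * A * W = four_block_mat (mat 1 1 (\<lambda>_. e)) (0\<^sub>m 1 (n - 1)) (0\<^sub>m (n - 1) 1) B"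
    using symmetric_deflation[OF A sym n W] by blast
  have "char_poly A = char_poly (W\<^sup>T * A * W)"
    using orthogonal_similar[OF A W] char_poly_similar unfolding similar_mat_def by blast
  also have "\<dots> = [:-e, 1:] * char_poly B"
    unfolding block
    by (subst char_poly_four_block_zeros_col[OF _ _ B(1)]) (auto simp: char_poly_defs det_def sign_def)
  finally have "[:-e, 1:] * char_poly B = [:-e, 1:] * p"
    using cp by simp
  then have "char_poly B = p"
    by (rule mult_left_cancel[THEN iffD1, rotated]) simp
  with W B block show thesis using that by blast
qed

lemma real_symmetric_diagonalization:
  fixes A :: "real mat"
  assumes "A \<in> carrier_mat n n" "A\<^sup>T = A" "char_poly A = (\<Prod>e\<leftarrow>es. [:-e, 1:])"
  shows "\<exists>P. similar_mat_wit A (mat_diag n (\<lambda>i. es ! i)) P P\<^sup>T"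
  using assms
proof (induction es arbitrary: n A)
  case Nil
  then have "n = 0" using degree_monic_char_poly[of A n] by simp
  with Nil.prems(1) show ?case
    by (intro exI[of _ "1\<^sub>m 0"] similar_mat_witI[of _ _ 0]) (auto simp: mat_diag_def)
next
  case (Cons e es)
  note A = Cons.prems(1) and cp = Cons.prems(3)
  have "n = Suc (length es)"
    using degree_monic_char_poly[OF A] degree_linear_factors[of uminus "e # es"] cp by simp
  then have n: "0 < n" by simp
  obtain W B where W: "W \<in> carrier_mat n n" "W\<^sup>T * W = 1\<^sub>m n"
    and B: "B \<in> carrier_mat (n - 1) (n - 1)" "B\<^sup>T = B" "char_poly B = (\<Prod>e\<leftarrow>es. [:-e, 1:])"
    and block: "W\<^sup>T * A * W = four_block_mat (mat 1 1 (\<lambda>_. e)) (0\<^sub>m 1 (n - 1)) (0\<^sub>m (n - 1) 1) B"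
    using real_symmetric_eigen_deflation[OF A Cons.prems(2) n, of e "\<Prod>e\<leftarrow>es. [:-e, 1:]"] cp
    by auto
  obtain Q where "similar_mat_wit B (mat_diag (n - 1) (\<lambda>i. es ! i)) Q Q\<^sup>T"
    using Cons.IH[OF B] by blast
  then obtain R where R: "similar_mat_wit (W\<^sup>T * A * W)
      (four_block_mat (mat 1 1 (\<lambda>_. e)) (0\<^sub>m 1 (n - 1)) (0\<^sub>m (n - 1) 1) (mat_diag (n - 1) (\<lambda>i. es ! i)))
      R R\<^sup>T"
    unfolding block using similar_mat_wit_extend_block[OF B(1)] by blast
  have "four_block_mat (mat 1 1 (\<lambda>_. e)) (0\<^sub>m 1 (n - 1)) (0\<^sub>m (n - 1) 1) (mat_diag (n - 1) (\<lambda>i. es ! i))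
      = mat_diag n (\<lambda>i. (e # es) ! i)"
    using n by (intro eq_matI) (auto simp: four_block_mat_def mat_diag_def nth_Cons')
  with similar_mat_wit_trans[OF orthogonal_similar[OF A W] R]
  have "similar_mat_wit A (mat_diag n (\<lambda>i. (e # es) ! i)) (W * R) (R\<^sup>T * W\<^sup>T)" by simp
  moreover have "W\<^sup>T * A * W \<in> carrier_mat n n" using A W by auto
  then have "R \<in> carrier_mat n n" using similar_mat_witD2[OF _ R] by auto
  then have "R\<^sup>T * W\<^sup>T = (W * R)\<^sup>T"
    using transpose_mult[OF W(1)] by simp
  ultimately show ?case by auto
qed

theorem real_symmetric_spectral_theorem:
  fixes A :: "real mat"
  assumes "A \<in> carrier_mat n n" "A\<^sup>T = A"
  obtains es P where "char_poly A = (\<Prod>e\<leftarrow>es. [:-e, 1:])" "length es = n"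
    "similar_mat_wit A (mat_diag n (\<lambda>i. es ! i)) P P\<^sup>T"
proof -
  obtain es where es: "char_poly A = (\<Prod>e\<leftarrow>es. [:-e, 1:])" "length es = n"
    using real_symmetric_char_poly_splits[OF assms] .
  with real_symmetric_diagonalization[OF assms es(1)] that show thesis by blast
qed

lemma mat_diag_mult_vec:
  "v \<in> carrier_vec n \<Longrightarrow> mat_diag n f *\<^sub>v v = vec n (\<lambda>i. f i * v $ i)"
proof (intro eq_vecI)
  fix i assume "v \<in> carrier_vec n" "i < dim_vec (vec n (\<lambda>i. f i * v $ i))"
  then show "(mat_diag n f *\<^sub>v v) $ i = vec n (\<lambda>i. f i * v $ i) $ i"
    by (auto simp: mat_diag_def scalar_prod_def sum.remove[of _ i])
qed (simp add: mat_diag_def)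

locale orthogonal_diagonalization =
  fixes A P :: "real mat" and es :: "real list" and n :: nat
  assumes carrier: "A \<in> carrier_mat n n"
    and length_es: "length es = n"
    and similar: "similar_mat_wit A (mat_diag n (\<lambda>i. es ! i)) P P\<^sup>T"
begin

lemma P_carrier: "P \<in> carrier_mat n n"
  and P_orthogonal: "P\<^sup>T * P = 1\<^sub>m n" "P * P\<^sup>T = 1\<^sub>m n"
  and A_eq: "A = P * (mat_diag n (\<lambda>i. es ! i) * P\<^sup>T)"
  using similar_mat_witD2[OF carrier similar] by auto

lemma diag_carrier: "mat_diag n (\<lambda>i. es ! i) \<in> carrier_mat n n"
  by simp

lemma transpose_P_carrier: "P\<^sup>T \<in> carrier_mat n n"
  using P_carrier by simp

lemma col_carrier: "col P i \<in> carrier_vec n"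
  using P_carrier by (intro carrier_vecI) auto

lemma index_transpose_P_mult_vec: "i < n \<Longrightarrow> (P\<^sup>T *\<^sub>v x) $ i = col P i \<bullet> x"
  using P_carrier by simp

lemma eigenvector_col: "i < n \<Longrightarrow> A *\<^sub>v col P i = es ! i \<cdot>\<^sub>v col P i"
proof -
  assume i: "i < n"
  have "A * P = P * (mat_diag n (\<lambda>i. es ! i) * (P\<^sup>T * P))"
    unfolding A_eq
    using assoc_mult_mat[OF P_carrier mult_carrier_mat[OF _ transpose_P_carrier] P_carrier]
      assoc_mult_mat[OF _ transpose_P_carrier P_carrier] by simp
  then have "A * P = P * mat_diag n (\<lambda>i. es ! i)"
    using P_carrier P_orthogonal(1) right_mult_one_mat[OF diag_carrier] by simp
  then have "A *\<^sub>v col P i = col (P * mat_diag n (\<lambda>i. es ! i)) i"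
    using col_mult2[OF carrier P_carrier i] by simp
  then show ?thesis
    using P_carrier i by (intro eq_vecI) (auto simp: mat_diag_mult_right[OF P_carrier] col_def)
qed

lemma col_orthonormal: "i < n \<Longrightarrow> j < n \<Longrightarrow> col P i \<bullet> col P j = (if i = j then 1 else 0)"
  using arg_cong[OF P_orthogonal(1), of "\<lambda>M. M $$ (i, j)"] P_carrier by simp

lemma scalar_prod_self_expansion:
  assumes x: "x \<in> carrier_vec n"
  shows "x \<bullet> x = (\<Sum>i<n. (col P i \<bullet> x)\<^sup>2)"
proof -
  let ?y = "P\<^sup>T *\<^sub>v x"
  have "x = P *\<^sub>v ?y"
    using x P_carrier P_orthogonal(2) by (simp add: assoc_mult_mat_vec[symmetric, of _ n n _ n])
  moreover have "?y \<in> carrier_vec n" using P_carrier x by simp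
  ultimately have "x \<bullet> x = ?y \<bullet> ?y"
    using transpose_vec_mult_scalar[OF P_carrier _ x] by metis
  then show ?thesis
    using index_transpose_P_mult_vec P_carrier by (simp add: scalar_prod_def lessThan_atLeast0 power2_eq_square)
qed

lemma quadratic_form_expansion:
  assumes x: "x \<in> carrier_vec n"
  shows "x \<bullet> (A *\<^sub>v x) = (\<Sum>i<n. es ! i * (col P i \<bullet> x)\<^sup>2)"
proof -
  let ?D = "mat_diag n (\<lambda>i. es ! i)" and ?y = "P\<^sup>T *\<^sub>v x"
  have "A *\<^sub>v x = P *\<^sub>v (?D *\<^sub>v ?y)"
    unfolding A_eq
    using assoc_mult_mat_vec[OF P_carrier mult_carrier_mat[OF _ transpose_P_carrier] x]
      assoc_mult_mat_vec[OF _ transpose_P_carrier x] by simp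
  moreover have "?D *\<^sub>v ?y \<in> carrier_vec n"
    using mult_mat_vec_carrier[OF diag_carrier mult_mat_vec_carrier[OF transpose_P_carrier x]] .
  ultimately have "x \<bullet> (A *\<^sub>v x) = ?y \<bullet> (?D *\<^sub>v ?y)"
    using transpose_vec_mult_scalar[OF P_carrier _ x] by metis
  also have "\<dots> = (\<Sum>i<n. es ! i * (col P i \<bullet> x)\<^sup>2)"
    using x P_carrier index_transpose_P_mult_vec
    by (simp add: mat_diag_mult_vec scalar_prod_def lessThan_atLeast0 power2_eq_square mult_ac)
  finally show ?thesis .
qed

lemma eigenvalue_eq_quadratic_form: "i < n \<Longrightarrow> es ! i = col P i \<bullet> (A *\<^sub>v col P i)"
  using eigenvector_col col_orthonormal col_carrier by simp

lemma exists_eigenvalue_le_rayleigh: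
  assumes x: "x \<in> carrier_vec n" "x \<noteq> 0\<^sub>v n"
    and orth: "\<And>a. a \<in> S \<Longrightarrow> col P a \<bullet> x = 0"
    and le: "x \<bullet> (A *\<^sub>v x) \<le> c * (x \<bullet> x)"
  obtains i where "i < n" "i \<notin> S" "es ! i \<le> c"
proof -
  let ?y = "\<lambda>i. col P i \<bullet> x"
  have "(\<Sum>i<n. (?y i)\<^sup>2) \<noteq> 0"
    using scalar_prod_self_expansion[OF x(1)] real_scalar_prod_self_pos[OF x(1)] x(2) by simp
  then have "\<exists>i<n. ?y i \<noteq> 0"
    by (metis (no_types, lifting) lessThan_iff sum.neutral zero_power2)
  then obtain i0 where i0: "i0 < n" "?y i0 \<noteq> 0" by blast
  have "\<exists>i<n. i \<notin> S \<and> es ! i \<le> c"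
  proof (rule ccontr)
    assume "\<not> ?thesis"
    then have gt: "c < es ! i" if "i < n" "i \<notin> S" for i
      using that by auto
    have "(\<Sum>i<n. c * (?y i)\<^sup>2) < (\<Sum>i<n. es ! i * (?y i)\<^sup>2)"
    proof (rule sum_strict_mono_ex1)
      show "\<forall>i\<in>{..<n}. c * (?y i)\<^sup>2 \<le> es ! i * (?y i)\<^sup>2"
      proof
        fix i assume i: "i \<in> {..<n}"
        show "c * (?y i)\<^sup>2 \<le> es ! i * (?y i)\<^sup>2"
        proof (cases "i \<in> S")
          case False
          then show ?thesis using gt[of i] i by (intro mult_right_mono) auto
        qed (simp add: orth)
      qed
      show "\<exists>i\<in>{..<n}. c * (?y i)\<^sup>2 < es ! i * (?y i)\<^sup>2"
        using i0 gt[OF i0(1)] orth by (intro bexI[of _ i0]) auto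
    qed simp
    then show False
      using le scalar_prod_self_expansion[OF x(1)] quadratic_form_expansion[OF x(1)]
      by (simp add: sum_distrib_left)
  qed
  then show thesis using that by blast
qed

end

section \<open>The Laplacian quadratic form\<close>

definition edge_energy :: "nat \<Rightarrow> (nat \<Rightarrow> nat \<Rightarrow> bool) \<Rightarrow> real vec \<Rightarrow> real" where
  "edge_energy N g x = (\<Sum>i<N. \<Sum>j<N. if g i j then (x $ i - x $ j)\<^sup>2 else 0)"

lemma edge_energy_nonneg: "0 \<le> edge_energy N g x"
  unfolding edge_energy_def by (intro sum_nonneg) auto

lemma edge_energy_eq_0_imp_eq:
  assumes "edge_energy N g x = 0" "i < N" "j < N" "g i j"
  shows "x $ i = x $ j"
proof -
  have "\<forall>i\<in>{..<N}. (\<Sum>j<N. if g i j then (x $ i - x $ j)\<^sup>2 else 0) = 0"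
    using assms(1) unfolding edge_energy_def
    by (subst sum_nonneg_eq_0_iff[symmetric]) (auto intro!: sum_nonneg)
  then have "\<forall>j\<in>{..<N}. (if g i j then (x $ i - x $ j)\<^sup>2 else 0) = (0 :: real)"
    using assms(2) by (subst sum_nonneg_eq_0_iff[symmetric]) auto
  then have "(x $ i - x $ j)\<^sup>2 = 0" using assms(3,4) by (auto dest: bspec[of _ _ j])
  then show ?thesis by simp
qed

lemma laplacian_carrier: "laplacian N g \<in> carrier_mat N N"
  unfolding laplacian_def by simp

lemma laplacian_symmetric: "\<forall>u v. g u v \<longrightarrow> g v u \<Longrightarrow> (laplacian N g)\<^sup>T = laplacian N g"
  unfolding laplacian_def by (intro eq_matI) auto

lemma degree_eq_sum: "real (degree N g i) = (\<Sum>j<N. if g i j then 1 else 0)"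
  unfolding degree_def by (simp add: sum.If_cases Int_def conj_commute)

lemma laplacian_quadratic_form:
  assumes sym: "\<forall>u v. g u v \<longrightarrow> g v u" and x: "x \<in> carrier_vec N"
  shows "x \<bullet> (laplacian N g *\<^sub>v x) = edge_energy N g x / 2"
proof -
  let ?a = "\<lambda>i j. if g i j then 1 else (0 :: real)"
  have Lx: "(laplacian N g *\<^sub>v x) $ i = (\<Sum>j<N. ?a i j * (x $ i - x $ j))" if i: "i < N" for i
  proof -
    have "(laplacian N g *\<^sub>v x) $ i
        = (\<Sum>j<N. ((if i = j then real (degree N g i) else 0) - ?a i j) * x $ j)"
      using i x by (simp add: laplacian_def scalar_prod_def lessThan_atLeast0)
    also have "\<dots> = (\<Sum>j<N. (if i = j then real (degree N g i) * x $ i else 0) - ?a i j * x $ j)"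
      by (intro sum.cong refl) (auto simp: left_diff_distrib)
    also have "\<dots> = real (degree N g i) * x $ i - (\<Sum>j<N. ?a i j * x $ j)"
      using i by (simp add: sum_subtractf)
    finally show ?thesis
      by (simp add: degree_eq_sum sum_distrib_right right_diff_distrib sum_subtractf)
  qed
  define S where "S = (\<Sum>i<N. \<Sum>j<N. ?a i j * (x $ i * (x $ i - x $ j)))"
  have "x \<bullet> (laplacian N g *\<^sub>v x) = S"
    using x laplacian_carrier[of N g] Lx
    by (simp add: S_def scalar_prod_def lessThan_atLeast0 sum_distrib_left mult_ac)
  moreover have "S = (\<Sum>i<N. \<Sum>j<N. ?a i j * (x $ j * (x $ j - x $ i)))"
  proof -
    have "S = (\<Sum>j<N. \<Sum>i<N. ?a i j * (x $ i * (x $ i - x $ j)))"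
      unfolding S_def by (rule sum.swap)
    also have "\<dots> = (\<Sum>i<N. \<Sum>j<N. ?a i j * (x $ j * (x $ j - x $ i)))"
      using sym by (intro sum.cong refl) metis
    finally show ?thesis .
  qed
  moreover have "edge_energy N g x = S + (\<Sum>i<N. \<Sum>j<N. ?a i j * (x $ j * (x $ j - x $ i)))"
    unfolding edge_energy_def S_def sum.distrib[symmetric]
    by (intro sum.cong refl) (auto simp: power2_eq_square algebra_simps)
  ultimately show ?thesis by simp
qed

lemma connected_laplacian_form_nonpos_imp_const:
  assumes G: "simple_graph N g" and conn: "connected_graph N g"
    and x: "x \<in> carrier_vec N" and nonpos: "x \<bullet> (laplacian N g *\<^sub>v x) \<le> 0"
    and i: "i < N" and j: "j < N"
  shows "x $ i = x $ j"
proof -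
  have sym: "\<forall>u v. g u v \<longrightarrow> g v u" and edges: "\<And>u v. g u v \<Longrightarrow> u < N \<and> v < N"
    using G unfolding simple_graph_def by blast+
  have energy: "edge_energy N g x = 0"
    using nonpos edge_energy_nonneg[of N g x] laplacian_quadratic_form[OF sym x] by simp
  have "g\<^sup>*\<^sup>* i j" using conn i j unfolding connected_graph_def by blast
  then show ?thesis
  proof (induction rule: rtranclp_induct)
    case (step y z)
    then show ?case using edge_energy_eq_0_imp_eq[OF energy] edges[OF step(2)] by simp
  qed simp
qed

section \<open>The second Laplacian eigenvalue of a connected graph\<close>

lemma sort_nth_1_le_iff:
  fixes xs :: "'a :: linorder list"
  assumes "2 \<le> length xs"
  shows "sort xs ! 1 \<le> c \<longleftrightarrow>
    (\<exists>i j. i < length xs \<and> j < length xs \<and> i \<noteq> j \<and> xs ! i \<le> c \<and> xs ! j \<le> c)"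
proof -
  have "2 \<le> length (sort xs)" using assms by simp
  then obtain a b t where ab: "sort xs = a # b # t"
    by (cases "sort xs"; cases "tl (sort xs)") auto
  have sorted: "a \<le> b" "\<forall>y\<in>set t. b \<le> y"
    using sorted_sort[of xs] unfolding ab by auto
  have "length (filter (\<lambda>x. x \<le> c) (sort xs)) = card {i. i < length xs \<and> xs ! i \<le> c}"
    by (simp add: filter_sort length_filter_conv_card)
  moreover have "2 \<le> length (filter (\<lambda>x. x \<le> c) (sort xs)) \<longleftrightarrow> b \<le> c"
  proof
    assume "b \<le> c"
    moreover from this have "a \<le> c" using sorted(1) by simp
    ultimately show "2 \<le> length (filter (\<lambda>x. x \<le> c) (sort xs))"
      unfolding ab by simp
  next
    assume "2 \<le> length (filter (\<lambda>x. x \<le> c) (sort xs))"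
    moreover have "filter (\<lambda>x. x \<le> c) t = []" if "c < b"
      using that sorted(2) by (auto simp: filter_empty_conv)
    ultimately show "b \<le> c" unfolding ab by (cases "a \<le> c") (auto split: if_splits)
  qed
  moreover have "2 \<le> card {i. i < length xs \<and> xs ! i \<le> c} \<longleftrightarrow>
    (\<exists>i j. i < length xs \<and> j < length xs \<and> i \<noteq> j \<and> xs ! i \<le> c \<and> xs ! j \<le> c)"
    using card_le_Suc0_iff_eq[of "{i. i < length xs \<and> xs ! i \<le> c}"] by auto
  ultimately show ?thesis unfolding ab by simp
qed

lemma scalar_prod_const_left:
  assumes "q \<in> carrier_vec N" "\<And>r. r < N \<Longrightarrow> p $ r = \<alpha>"
  shows "p \<bullet> q = \<alpha> * (\<Sum>r<N. q $ r)"
  using assms by (simp add: scalar_prod_def lessThan_atLeast0 sum_distrib_left)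

lemma proots_linear_factors: "proots (\<Prod>e\<leftarrow>es. [:-e, 1:]) = mset (es :: 'a :: idom list)"
proof (induction es)
  case (Cons e es)
  have "(\<Prod>e\<leftarrow>es. [:-e, 1:]) \<noteq> (0 :: 'a poly)" by (auto simp: prod_list_zero_iff)
  with Cons.IH show ?case by (simp add: proots_mult del: mult_pCons_left)
qed simp

lemma laplacian_orthogonal_diagonalization:
  assumes "simple_graph N g"
  obtains es P where "lambda2 N g = sort es ! 1"
    "orthogonal_diagonalization (laplacian N g) P es N"
proof -
  have "\<forall>u v. g u v \<longrightarrow> g v u" using assms unfolding simple_graph_def by blast
  from real_symmetric_spectral_theorem[OF laplacian_carrier laplacian_symmetric[OF this]]
  obtain es P where "char_poly (laplacian N g) = (\<Prod>e\<leftarrow>es. [:-e, 1:])" "length es = N"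
    "similar_mat_wit (laplacian N g) (mat_diag N (\<lambda>i. es ! i)) P P\<^sup>T" .
  then show thesis
    by (intro that[of es P])
      (auto simp: lambda2_def laplacian_eigenvalues_def proots_linear_factors
        orthogonal_diagonalization_def laplacian_carrier)
qed

lemma lambda2_pos:
  assumes G: "simple_graph N g" and conn: "connected_graph N g" and N: "2 \<le> N"
  shows "0 < lambda2 N g"
proof -
  obtain es P where lambda2: "lambda2 N g = sort es ! 1"
    and diag: "orthogonal_diagonalization (laplacian N g) P es N"
    using laplacian_orthogonal_diagonalization[OF G] .
  interpret orthogonal_diagonalization "laplacian N g" P es N by (fact diag)
  have const: "col P i $ r = col P i $ 0" if "i < N" "es ! i \<le> 0" "r < N" for i r
  proof -
    have "col P i \<bullet> (laplacian N g *\<^sub>v col P i) \<le> 0"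
      using eigenvalue_eq_quadratic_form that by simp
    from connected_laplacian_form_nonpos_imp_const[OF G conn col_carrier this that(3), where j = 0]
    show ?thesis using that(3) by simp
  qed
  have "\<not> (i < N \<and> j < N \<and> i \<noteq> j \<and> es ! i \<le> 0 \<and> es ! j \<le> 0)" for i j
  proof
    assume ij: "i < N \<and> j < N \<and> i \<noteq> j \<and> es ! i \<le> 0 \<and> es ! j \<le> 0"
    obtain \<alpha> \<beta> where \<alpha>: "\<And>r. r < N \<Longrightarrow> col P i $ r = \<alpha>"
      and \<beta>: "\<And>r. r < N \<Longrightarrow> col P j $ r = \<beta>"
      using const ij by blast
    have "(\<Sum>r<N. col P i $ r) = real N * \<alpha>" "(\<Sum>r<N. col P j $ r) = real N * \<beta>"
      using \<alpha> \<beta> by simp_all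
    then have "real N * (\<alpha> * \<beta>) = 0" "real N * (\<alpha> * \<alpha>) = 1" "real N * (\<beta> * \<beta>) = 1"
      using scalar_prod_const_left[OF col_carrier \<alpha>] scalar_prod_const_left[OF col_carrier \<beta>]
        col_orthonormal[of i j] col_orthonormal[of i i] col_orthonormal[of j j] ij
      by (simp_all add: mult_ac)
    then show False by auto
  qed
  then have "\<not> sort es ! 1 \<le> 0"
    using sort_nth_1_le_iff[of es 0] length_es N by blast
  then show ?thesis unfolding lambda2 by simp
qed

lemma lambda2_le_rayleigh_quotient:
  assumes G: "simple_graph N g" and conn: "connected_graph N g"
    and x: "x \<in> carrier_vec N" "x \<noteq> 0\<^sub>v N" and sum_x: "(\<Sum>r<N. x $ r) = 0"
  shows "lambda2 N g \<le> x \<bullet> (laplacian N g *\<^sub>v x) / (x \<bullet> x)"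
proof -
  obtain es P where lambda2: "lambda2 N g = sort es ! 1"
    and diag: "orthogonal_diagonalization (laplacian N g) P es N"
    using laplacian_orthogonal_diagonalization[OF G] .
  interpret orthogonal_diagonalization "laplacian N g" P es N by (fact diag)
  have sym: "\<forall>u v. g u v \<longrightarrow> g v u" using G unfolding simple_graph_def by blast
  define c where "c = x \<bullet> (laplacian N g *\<^sub>v x) / (x \<bullet> x)"
  have xx: "0 < x \<bullet> x" using real_scalar_prod_self_pos[OF x(1)] x(2) by simp
  have c: "0 \<le> c"
    unfolding c_def using laplacian_quadratic_form[OF sym x(1)] edge_energy_nonneg[of N g x] xx by simp
  have "0 < N" using x by (cases N) auto
  \<comment> \<open>The all-ones vector yields an eigenvector of eigenvalue 0, which is constant and hence orthogonal to \<open>x\<close>.\<close>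
  define u where "u = vec N (\<lambda>_. 1 :: real)"
  have u: "u \<in> carrier_vec N" "u \<noteq> 0\<^sub>v N"
    using \<open>0 < N\<close> unfolding u_def by (auto simp: vec_eq_iff)
  have "edge_energy N g u = 0"
    unfolding edge_energy_def u_def by (auto intro!: sum.neutral)
  then have "u \<bullet> (laplacian N g *\<^sub>v u) \<le> 0 * (u \<bullet> u)"
    using laplacian_quadratic_form[OF sym u(1)] by simp
  then obtain a where a: "a < N" "es ! a \<le> 0"
    using exists_eigenvalue_le_rayleigh[OF u, of "{}"] by blast
  have "col P a \<bullet> (laplacian N g *\<^sub>v col P a) \<le> 0"
    using eigenvalue_eq_quadratic_form a by simp
  then obtain \<alpha> where "\<And>r. r < N \<Longrightarrow> col P a $ r = \<alpha>"
    using connected_laplacian_form_nonpos_imp_const[OF G conn col_carrier _ _ \<open>0 < N\<close>] by blast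
  then have "col P a \<bullet> x = 0"
    using scalar_prod_const_left[OF x(1)] sum_x by simp
  moreover have "x \<bullet> (laplacian N g *\<^sub>v x) \<le> c * (x \<bullet> x)"
    unfolding c_def using xx by simp
  ultimately obtain i where "i < N" "i \<noteq> a" "es ! i \<le> c"
    using exists_eigenvalue_le_rayleigh[OF x, of "{a}" c] by blast
  then have "sort es ! 1 \<le> c"
    using sort_nth_1_le_iff[of es c] a c length_es by fastforce
  then show ?thesis unfolding lambda2 c_def .
qed

section \<open>The doubled graph\<close>

lemma double_graph_simple:
  assumes "simple_graph n adj" "K \<subseteq> {0..<n} \<times> {0..<n}"
  shows "simple_graph (2 * n) (double_graph n adj K)"
  using assms unfolding simple_graph_def double_graph_def by auto

lemma double_graph_connected:
  assumes G: "simple_graph n adj" and conn: "connected_graph n adj"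
    and ab: "(a, b) \<in> K" and K: "K \<subseteq> {0..<n} \<times> {0..<n}"
  shows "connected_graph (2 * n) (double_graph n adj K)"
proof -
  let ?h = "double_graph n adj K"
  have copies: "?h\<^sup>*\<^sup>* u v \<and> ?h\<^sup>*\<^sup>* (n + u) (n + v)" if "u < n" "v < n" for u v
  proof -
    have "adj\<^sup>*\<^sup>* u v" using conn that unfolding connected_graph_def by blast
    then show ?thesis
    proof (induction rule: rtranclp_induct)
      case (step y z)
      then have "?h y z" "?h (n + y) (n + z)"
        using G unfolding simple_graph_def double_graph_def by auto
      with step.IH show ?case by (meson rtranclp.rtrancl_into_rtrancl)
    qed simp
  qed
  have ab_lt: "a < n" "b < n" using ab K by auto
  have cross: "?h a (n + b)" "?h (n + b) a" using ab ab_lt unfolding double_graph_def by auto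
  have to_a: "?h\<^sup>*\<^sup>* u a" and from_a: "?h\<^sup>*\<^sup>* a u" if "u < 2 * n" for u
  proof -
    show "?h\<^sup>*\<^sup>* u a"
    proof (cases "u < n")
      case False
      then have "?h\<^sup>*\<^sup>* u (n + b)" using copies[of "u - n" b] ab_lt that by simp
      then show ?thesis using cross(2) by (meson rtranclp.rtrancl_into_rtrancl)
    qed (use copies ab_lt in blast)
    show "?h\<^sup>*\<^sup>* a u"
    proof (cases "u < n")
      case False
      then have "?h\<^sup>*\<^sup>* (n + b) u" using copies[of b "u - n"] ab_lt that by simp
      then show ?thesis using cross(1) by (meson converse_rtranclp_into_rtranclp)
    qed (use copies ab_lt in blast)
  qed
  show ?thesis
    unfolding connected_graph_def using to_a from_a by (meson rtranclp_trans)
qed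

definition cut_vector :: "nat \<Rightarrow> real vec" where
  "cut_vector n = vec (2 * n) (\<lambda>i. if i < n then 1 else -1)"

lemma cut_vector_carrier: "cut_vector n \<in> carrier_vec (2 * n)"
  unfolding cut_vector_def by simp

lemma cut_vector_nonzero: "0 < n \<Longrightarrow> cut_vector n \<noteq> 0\<^sub>v (2 * n)"
  unfolding cut_vector_def by (auto simp: vec_eq_iff)

lemma sum_cut_vector: "(\<Sum>r<2 * n. cut_vector n $ r) = 0"
proof -
  have "(\<Sum>r<2 * n. cut_vector n $ r) = (\<Sum>r\<in>{0..<n}. cut_vector n $ r) + (\<Sum>r\<in>{n..<2 * n}. cut_vector n $ r)"
    unfolding lessThan_atLeast0 by (rule sum.atLeastLessThan_concat[symmetric]) auto
  also have "\<dots> = (\<Sum>r\<in>{0..<n}. 1) + (\<Sum>r\<in>{n..<2 * n}. -1)"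
    unfolding cut_vector_def by (intro arg_cong2[where f = "(+)"] sum.cong) auto
  finally show ?thesis by simp
qed

lemma cut_vector_scalar_prod_self: "cut_vector n \<bullet> cut_vector n = real (2 * n)"
proof -
  have "cut_vector n \<bullet> cut_vector n = (\<Sum>r\<in>{0..<2 * n}. 1)"
    unfolding cut_vector_def scalar_prod_def by (intro sum.cong) auto
  then show ?thesis by simp
qed

lemma double_graph_cut_energy:
  assumes K: "K \<subseteq> {0..<n} \<times> {0..<n}"
  shows "edge_energy (2 * n) (double_graph n adj K) (cut_vector n) = 8 * real (card K)"
proof -
  define C where "C = (\<lambda>(a, b). (a, n + b)) ` K \<union> (\<lambda>(a, b). (n + b, a)) ` K"
  have C: "C \<subseteq> {..<2 * n} \<times> {..<2 * n}" using K unfolding C_def by auto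
  have C_iff: "(i, j) \<in> C \<longleftrightarrow> (i < n \<and> n \<le> j \<and> (i, j - n) \<in> K) \<or> (j < n \<and> n \<le> i \<and> (j, i - n) \<in> K)"
    for i j
  proof
    assume "(i, j) \<in> C"
    then show "(i < n \<and> n \<le> j \<and> (i, j - n) \<in> K) \<or> (j < n \<and> n \<le> i \<and> (j, i - n) \<in> K)"
      using K unfolding C_def by auto
  next
    assume "(i < n \<and> n \<le> j \<and> (i, j - n) \<in> K) \<or> (j < n \<and> n \<le> i \<and> (j, i - n) \<in> K)"
    then show "(i, j) \<in> C"
      unfolding C_def by (auto intro: rev_image_eqI[of "(i, j - n)"] rev_image_eqI[of "(j, i - n)"])
  qed
  have summand: "(if double_graph n adj K i j then (cut_vector n $ i - cut_vector n $ j)\<^sup>2 else 0)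
      = (if (i, j) \<in> C then 4 else 0)" if "i < 2 * n" "j < 2 * n" for i j
    using that unfolding C_iff double_graph_def cut_vector_def by (cases "i < n"; cases "j < n") auto
  have "finite K" using K by (rule finite_subset) simp
  moreover have "inj_on (\<lambda>(a, b). (a, n + b)) K" "inj_on (\<lambda>(a, b). (n + b, a)) K"
    by (auto simp: inj_on_def)
  ultimately have "card C = card K + card K"
    unfolding C_def using K by (subst card_Un_disjoint) (auto simp: card_image)
  moreover have "edge_energy (2 * n) (double_graph n adj K) (cut_vector n)
      = (\<Sum>p\<in>{..<2 * n} \<times> {..<2 * n}. if p \<in> C then 4 else 0)"
    unfolding edge_energy_def sum.cartesian_product using summand by (intro sum.cong refl) auto
  moreover have "\<dots> = 4 * real (card C)"
    using C by (simp add: sum.If_cases Int_absorb1)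
  ultimately show ?thesis by simp
qed

theorem theorem4p3:
  fixes n k :: nat and adj :: "nat \<Rightarrow> nat \<Rightarrow> bool" and K :: "(nat \<times> nat) set"
  assumes "simple_graph n adj"
    and "connected_graph n adj"
    and "1 \<le> k" and "k \<le> n"
    and "K \<subseteq> {0..<n} \<times> {0..<n}"
    and "card K = k"
  shows "0 < lambda2 (2*n) (double_graph n adj K)
       \<and> lambda2 (2*n) (double_graph n adj K) \<le> 2 * real k / real n"
proof -
  let ?B = "double_graph n adj K"
  have "K \<noteq> {}" using assms(3,6) by auto
  then obtain a b where ab: "(a, b) \<in> K" by auto
  have G: "simple_graph (2 * n) ?B" using double_graph_simple[OF assms(1,5)] .
  have conn: "connected_graph (2 * n) ?B" using double_graph_connected[OF assms(1,2) ab assms(5)] .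
  have "\<forall>u v. ?B u v \<longrightarrow> ?B v u" using G unfolding simple_graph_def by blast
  from laplacian_quadratic_form[OF this cut_vector_carrier[of n]]
  have "cut_vector n \<bullet> (laplacian (2 * n) ?B *\<^sub>v cut_vector n) = 4 * real k"
    using double_graph_cut_energy[OF assms(5), of adj] assms(6) by simp
  then have "lambda2 (2 * n) ?B \<le> 4 * real k / real (2 * n)"
    using lambda2_le_rayleigh_quotient[OF G conn cut_vector_carrier cut_vector_nonzero sum_cut_vector]
      cut_vector_scalar_prod_self assms(3,4) by simp
  then show ?thesis
    using lambda2_pos[OF G conn] assms(3,4) by simp
qed

end
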